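(* Fix $\epsilon\in(0,1/5)$ and an integer $d\geq3$. There is a constant $C=C(d,\epsilon)>0$ such that for every natural number $n\geq1$ and every $t\in\mathbb{N}\cap[1,2\epsilon\log_d n]$, $$\mathcal{G}_{n,d}\big(\{G\in\mathbb{G}_{n,d}: |\mathfrak{C}_t(G)|\geq n^{1-2\epsilon}\}\big)\leq C\,n^{5\epsilon-1}.$$
   Context: Graphs are undirected with no loops or parallel edges. $\mathbb{G}_{n,d}$ is the finite set of $d$-regular graphs on vertex set $\{1,\dots,n\}$ and $\mathcal{G}_{n,d}$ the uniform probability measure on it (the statement concerns those $n$ for which $\mathbb{G}_{n,d}$ is nonempty). A cycle in $G$ is a set $C=\{x_1,\dots,x_k\}$ of distinct vertices such that $\{x_1,x_2\},\dots,\{x_{k-1},x_k\},\{x_k,x_1\}$ are edges; $\mathfrak{C}_t(G)$ is the set of cycles $C$ with $|C|<t$. *)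

theory Defs
  imports "HOL-Probability.Probability_Mass_Function"
begin

text \<open>A graph on vertex set {1..n} is given by its edge set, a set of 2-element
subsets of {1..n}. No loops, no parallel edges.\<close>

definition possible_edges :: "nat \<Rightarrow> nat set set" where
  "possible_edges n = {e. \<exists>x y. e = {x, y} \<and> x \<noteq> y \<and> x \<in> {1..n} \<and> y \<in> {1..n}}"

definition degree :: "nat set set \<Rightarrow> nat \<Rightarrow> nat" where
  "degree E v = card {e \<in> E. v \<in> e}"

definition regular_graphs :: "nat \<Rightarrow> nat \<Rightarrow> nat set set set" where
  "regular_graphs n d = {E. E \<subseteq> possible_edges n \<and> (\<forall>v\<in>{1..n}. degree E v = d)}"

definition uniform_regular :: "nat \<Rightarrow> nat \<Rightarrow> nat set set pmf" where
  "uniform_regular n d = pmf_of_set (regular_graphs n d)"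

definition is_cycle :: "nat set set \<Rightarrow> nat set \<Rightarrow> bool" where
  "is_cycle E C \<longleftrightarrow> (\<exists>xs. distinct xs \<and> length xs \<ge> 3 \<and> set xs = C \<and>
      (\<forall>i. i + 1 < length xs \<longrightarrow> {xs ! i, xs ! (i + 1)} \<in> E) \<and>
      {last xs, hd xs} \<in> E)"

definition short_cycles :: "nat \<Rightarrow> nat set set \<Rightarrow> nat set set" where
  "short_cycles t E = {C. is_cycle E C \<and> card C < t}"

end

theory Submission
  imports Defs
begin

text \<open>Switching argument. Let \<open>F\<close> be a set of edges and \<open>{u, v} \<notin> F\<close>. Replacing two edges \<open>{u, v}, {x, y}\<close>
  of a \<open>d\<close>-regular graph by \<open>{u, x}, {v, y}\<close> maps each graph containing \<open>F \<union> {{u, v}}\<close>, together with one of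
  its at least \<open>n d - K\<close> switchable arcs \<open>(x, y)\<close> (where \<open>K = 4 d + 2 |F| + 2 d\<^sup>2\<close>), injectively to a graph
  containing \<open>F\<close> but not \<open>{u, v}\<close>, together with a pair of neighbours of \<open>u\<close> and \<open>v\<close>, of which there are
  \<open>d\<^sup>2\<close>. Hence a further edge is present with conditional probability at most \<open>d\<^sup>2 / (n d - K)\<close>, and
  iterating along the \<open>k\<close> edges of a fixed cyclic vertex sequence, then summing over the \<open>n\<^sup>k\<close> vertex sequences,
  bounds the expected number of \<open>k\<close>-cycles by \<open>(d e\<^bsup>\<epsilon>/2\<^esup>)\<^sup>k\<close> once \<open>n\<close> is large. For
  \<open>t \<le> 2 \<epsilon> log\<^sub>d n\<close> the expected number of cycles shorter than \<open>t\<close> is therefore \<open>O(n\<^bsup>3\<epsilon>\<^esup>)\<close>, and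
  Markov's inequality at the threshold \<open>n\<^bsup>1-2\<epsilon>\<^esup>\<close> gives the claim; small \<open>n\<close> are absorbed into \<open>C\<close>.\<close>

section \<open>Neighbourhoods in regular graphs\<close>

definition neighbours :: "nat set set \<Rightarrow> nat \<Rightarrow> nat set" where
  "neighbours G x = {y. {x, y} \<in> G}"

lemma finite_possible_edges: "finite (possible_edges n)"
proof -
  have "possible_edges n \<subseteq> Pow {1..n}"
    unfolding possible_edges_def by auto
  then show ?thesis
    by (rule finite_subset) simp
qed

lemma finite_regular_graphs: "finite (regular_graphs n d)"
proof -
  have "regular_graphs n d \<subseteq> Pow (possible_edges n)"
    unfolding regular_graphs_def by auto
  then show ?thesis
    by (rule finite_subset) (simp add: finite_possible_edges)
qed

lemma regular_graph_edges: "G \<in> regular_graphs n d \<Longrightarrow> G \<subseteq> possible_edges n"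
  unfolding regular_graphs_def by simp

lemma possible_edgeD:
  assumes "{x, y} \<in> possible_edges n"
  shows "x \<in> {1..n}" "y \<in> {1..n}" "x \<noteq> y"
  using assms unfolding possible_edges_def by (auto simp: doubleton_eq_iff)

lemma neighbours_subset: "G \<subseteq> possible_edges n \<Longrightarrow> neighbours G x \<subseteq> {1..n}"
  unfolding neighbours_def using possible_edgeD by blast

lemma not_in_neighbours_self: "G \<subseteq> possible_edges n \<Longrightarrow> x \<notin> neighbours G x"
  unfolding neighbours_def using possible_edgeD(3) by blast

lemma vertex_if_in_neighbours: "G \<subseteq> possible_edges n \<Longrightarrow> y \<in> neighbours G x \<Longrightarrow> x \<in> {1..n}"
  unfolding neighbours_def using possible_edgeD(1) by blast

lemma finite_neighbours: "G \<subseteq> possible_edges n \<Longrightarrow> finite (neighbours G x)"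
  by (rule finite_subset[OF neighbours_subset]) simp_all

lemma degree_eq_card_neighbours:
  assumes "G \<subseteq> possible_edges n"
  shows "degree G x = card (neighbours G x)"
proof -
  have "{e \<in> G. x \<in> e} = (\<lambda>y. {x, y}) ` neighbours G x"
  proof (intro equalityI subsetI)
    fix e assume e: "e \<in> {e \<in> G. x \<in> e}"
    then obtain a b where "e = {a, b}"
      using assms unfolding possible_edges_def by blast
    with e show "e \<in> (\<lambda>y. {x, y}) ` neighbours G x"
      unfolding neighbours_def by (auto simp: insert_commute)
  qed (auto simp: neighbours_def)
  moreover have "inj_on (\<lambda>y. {x, y}) (neighbours G x)"
    by (auto intro!: inj_onI simp: doubleton_eq_iff)
  ultimately show ?thesis
    unfolding degree_def by (simp add: card_image)
qed

lemma regular_graphs_iff: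
  "G \<in> regular_graphs n d \<longleftrightarrow>
     G \<subseteq> possible_edges n \<and> (\<forall>x\<in>{1..n}. card (neighbours G x) = d)"
  unfolding regular_graphs_def using degree_eq_card_neighbours by auto

lemma card_neighbours_regular:
  "G \<in> regular_graphs n d \<Longrightarrow> x \<in> {1..n} \<Longrightarrow> card (neighbours G x) = d"
  using regular_graphs_iff by blast

section \<open>Switchings\<close>

definition switch :: "nat set set \<Rightarrow> nat \<Rightarrow> nat \<Rightarrow> nat \<Rightarrow> nat \<Rightarrow> nat set set" where
  "switch G u v x y = insert {u, x} (insert {v, y} (G - {{u, v}, {x, y}}))"

lemma switch_regular:
  assumes G: "G \<in> regular_graphs n d"
    and edges: "{u, v} \<in> G" "{x, y} \<in> G"
    and distinct: "x \<noteq> u" "x \<noteq> v" "y \<noteq> u" "y \<noteq> v"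
    and non_edges: "{u, x} \<notin> G" "{v, y} \<notin> G"
  shows "switch G u v x y \<in> regular_graphs n d"
proof -
  have E: "G \<subseteq> possible_edges n"
    using G by (rule regular_graph_edges)
  have nbrs: "v \<in> neighbours G u" "u \<in> neighbours G v" "y \<in> neighbours G x" "x \<in> neighbours G y"
    using edges by (simp_all add: neighbours_def insert_commute)
  have non_nbrs: "x \<notin> neighbours G u" "y \<notin> neighbours G v" "u \<notin> neighbours G x" "v \<notin> neighbours G y"
    using non_edges by (simp_all add: neighbours_def insert_commute)
  have "u \<noteq> v" "x \<noteq> y"
    using nbrs not_in_neighbours_self[OF E] by metis+
  have "{u, x} \<in> possible_edges n" "{v, y} \<in> possible_edges n"
    using nbrs distinct vertex_if_in_neighbours[OF E] unfolding possible_edges_def by blast+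
  then have E': "switch G u v x y \<subseteq> possible_edges n"
    using E unfolding switch_def by blast
  have neighbours_switch: "neighbours (switch G u v x y) w =
      (if w = u then insert x (neighbours G u - {v})
       else if w = v then insert y (neighbours G v - {u})
       else if w = x then insert u (neighbours G x - {y})
       else if w = y then insert v (neighbours G y - {x})
       else neighbours G w)" for w
    using distinct \<open>u \<noteq> v\<close> \<open>x \<noteq> y\<close>
    unfolding switch_def neighbours_def by (auto simp: doubleton_eq_iff)
  have "card (neighbours (switch G u v x y) w) = card (neighbours G w)" for w
  proof -
    have exchange: "card (insert a (neighbours G z - {b})) = card (neighbours G z)"
      if "b \<in> neighbours G z" "a \<notin> neighbours G z" for a b z
      using that finite_neighbours[OF E] by (metis card_Suc_Diff1 card_insert_disjoint finite_Diff DiffD1)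
    show ?thesis
      using exchange[OF nbrs(1) non_nbrs(1)] exchange[OF nbrs(2) non_nbrs(2)]
        exchange[OF nbrs(3) non_nbrs(3)] exchange[OF nbrs(4) non_nbrs(4)]
      by (simp only: neighbours_switch split: if_splits) simp
  qed
  then show ?thesis
    using G E' by (simp add: regular_graphs_iff)
qed

lemma switch_inverse:
  assumes "{u, v} \<in> G" "{x, y} \<in> G" "{u, x} \<notin> G" "{v, y} \<notin> G"
  shows "G = insert {u, v} (insert {x, y} (switch G u v x y - {{u, x}, {v, y}}))"
  using assms unfolding switch_def by auto

definition arcs :: "nat set set \<Rightarrow> (nat \<times> nat) set" where
  "arcs G = {(x, y). {x, y} \<in> G}"

lemma arcs_eq_Sigma: "G \<subseteq> possible_edges n \<Longrightarrow> arcs G = Sigma {1..n} (neighbours G)"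
  using vertex_if_in_neighbours unfolding arcs_def neighbours_def by fastforce

lemma finite_arcs: "G \<in> regular_graphs n d \<Longrightarrow> finite (arcs G)"
  using arcs_eq_Sigma[OF regular_graph_edges] finite_neighbours[OF regular_graph_edges] by simp

lemma card_arcs_from:
  assumes G: "G \<in> regular_graphs n d" and X: "X \<subseteq> {1..n}"
  shows "card {p \<in> arcs G. fst p \<in> X} = card X * d"
proof -
  have E: "G \<subseteq> possible_edges n"
    using G by (rule regular_graph_edges)
  have "{p \<in> arcs G. fst p \<in> X} = Sigma X (neighbours G)"
    using X by (auto simp: arcs_eq_Sigma[OF E])
  then have "card {p \<in> arcs G. fst p \<in> X} = (\<Sum>x\<in>X. card (neighbours G x))"
    using X finite_neighbours[OF E] by (simp add: card_SigmaI finite_subset)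
  also have "\<dots> = card X * d"
    using X card_neighbours_regular[OF G] by (simp add: subset_iff)
  finally show ?thesis .
qed

lemma card_arcs_to:
  assumes "G \<in> regular_graphs n d" "X \<subseteq> {1..n}"
  shows "card {p \<in> arcs G. snd p \<in> X} = card X * d"
proof -
  have "{p \<in> arcs G. snd p \<in> X} = prod.swap ` {p \<in> arcs G. fst p \<in> X}"
    unfolding arcs_def by (auto simp: insert_commute image_iff)
  then show ?thesis
    using card_arcs_from[OF assms] by (simp add: card_image)
qed

lemma card_arcs:
  assumes "G \<in> regular_graphs n d"
  shows "card (arcs G) = n * d"
proof -
  have "{p \<in> arcs G. fst p \<in> {1..n}} = arcs G"
    using arcs_eq_Sigma[OF regular_graph_edges[OF assms]] by auto
  then show ?thesis
    using card_arcs_from[OF assms, of "{1..n}"] by simp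
qed

lemma card_pairs_of_edges_le:
  assumes "finite H"
  shows "finite {(x, y). {x, y} \<in> H}" "card {(x, y). {x, y} \<in> H} \<le> 2 * card H"
proof -
  have pairs: "finite {(x, y). {x, y} = e} \<and> card {(x, y). {x, y} = e} \<le> 2" for e
  proof (cases "\<exists>a b. e = {a, b}")
    case True
    then obtain a b where "e = {a, b}" by blast
    then have "{(x, y). {x, y} = e} = {(a, b), (b, a)}"
      by (auto simp: doubleton_eq_iff)
    then show ?thesis by (simp add: card_insert_le_m1)
  next
    case False
    then have "{(x, y). {x, y} = e} = {}" by auto
    then show ?thesis by simp
  qed
  have eq: "{(x, y). {x, y} \<in> H} = (\<Union>e\<in>H. {(x, y). {x, y} = e})" by auto
  show "finite {(x, y). {x, y} \<in> H}"
    unfolding eq by (rule finite_UN_I[OF assms]) (simp add: pairs)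
  have "card {(x, y). {x, y} \<in> H} \<le> (\<Sum>e\<in>H. card {(x, y). {x, y} = e})"
    unfolding eq using assms by (rule card_UN_le)
  also have "\<dots> \<le> (\<Sum>e\<in>H. 2)"
    by (rule sum_mono) (simp add: pairs)
  finally show "card {(x, y). {x, y} \<in> H} \<le> 2 * card H" by simp
qed

definition switchable_arcs :: "nat set set \<Rightarrow> nat \<Rightarrow> nat \<Rightarrow> nat set set \<Rightarrow> (nat \<times> nat) set" where
  "switchable_arcs H u v G =
     {(x, y). (x, y) \<in> arcs G \<and> x \<notin> {u, v} \<and> y \<notin> {u, v} \<and> {x, y} \<notin> H \<and> {u, x} \<notin> G \<and> {v, y} \<notin> G}"

lemma card_arcs_le_switchable:
  assumes G: "G \<in> regular_graphs n d" and uv: "u \<in> {1..n}" "v \<in> {1..n}" and H: "finite H"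
  shows "n * d \<le> card (switchable_arcs H u v G) + (4 * d + 2 * card H + 2 * (d * d))"
proof -
  let ?from = "\<lambda>X. {p \<in> arcs G. fst p \<in> X}" and ?to = "\<lambda>X. {p \<in> arcs G. snd p \<in> X}"
  let ?S = "switchable_arcs H u v G" and ?P = "{(x, y). {x, y} \<in> H}"
  have E: "G \<subseteq> possible_edges n"
    using G by (rule regular_graph_edges)
  have cover: "arcs G \<subseteq> ?S \<union> ?from {u, v} \<union> ?to {u, v} \<union> ?from (neighbours G u) \<union> ?to (neighbours G v) \<union> ?P"
    unfolding switchable_arcs_def arcs_def neighbours_def by auto
  have uv_subset: "{u, v} \<subseteq> {1..n}"
    using uv by simp
  have "card {u, v} * d \<le> 2 * d"
    by (simp add: card_insert_if)
  then have card_uv: "card (?from {u, v}) \<le> 2 * d" "card (?to {u, v}) \<le> 2 * d"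
    by (simp_all only: card_arcs_from[OF G uv_subset] card_arcs_to[OF G uv_subset])
  have card_nbrs: "card (?from (neighbours G u)) = d * d" "card (?to (neighbours G v)) = d * d"
    using card_arcs_from[OF G] card_arcs_to[OF G] neighbours_subset[OF E]
      card_neighbours_regular[OF G] uv by simp_all
  have "?S \<subseteq> arcs G"
    unfolding switchable_arcs_def by auto
  then have finite: "finite (?S \<union> ?from {u, v} \<union> ?to {u, v} \<union> ?from (neighbours G u) \<union> ?to (neighbours G v) \<union> ?P)"
    using finite_arcs[OF G] card_pairs_of_edges_le(1)[OF H] by (auto intro: finite_subset)
  have "n * d = card (arcs G)"
    using card_arcs[OF G] by simp
  also have "\<dots> \<le> card (?S \<union> ?from {u, v} \<union> ?to {u, v} \<union> ?from (neighbours G u) \<union> ?to (neighbours G v) \<union> ?P)"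
    using finite cover by (rule card_mono)
  also have "\<dots> \<le> card ?S + card (?from {u, v}) + card (?to {u, v}) + card (?from (neighbours G u))
      + card (?to (neighbours G v)) + card ?P"
    by (intro order_trans[OF card_Un_le] add_right_mono order_refl)
  also have "\<dots> \<le> card ?S + (4 * d + 2 * card H + 2 * (d * d))"
    using card_uv card_nbrs card_pairs_of_edges_le(2)[OF H] by linarith
  finally show ?thesis .
qed

lemma switch_switchable_arc:
  assumes G: "G \<in> regular_graphs n d" and "H \<subseteq> G" "{u, v} \<in> G" "{u, v} \<notin> H"
    and xy: "(x, y) \<in> switchable_arcs H u v G"
  shows "switch G u v x y \<in> regular_graphs n d" "H \<subseteq> switch G u v x y" "{u, v} \<notin> switch G u v x y"
    "(x, y) \<in> neighbours (switch G u v x y) u \<times> neighbours (switch G u v x y) v"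
proof -
  have "{x, y} \<in> G" "x \<noteq> u" "x \<noteq> v" "y \<noteq> u" "y \<noteq> v" "{x, y} \<notin> H" "{u, x} \<notin> G" "{v, y} \<notin> G"
    using xy unfolding switchable_arcs_def arcs_def by auto
  then show "switch G u v x y \<in> regular_graphs n d"
    using switch_regular[OF G \<open>{u, v} \<in> G\<close>] by blast
  show "H \<subseteq> switch G u v x y"
    using \<open>{x, y} \<notin> H\<close> assms(2,4) unfolding switch_def by blast
  show "{u, v} \<notin> switch G u v x y"
    using \<open>x \<noteq> v\<close> \<open>y \<noteq> u\<close> \<open>y \<noteq> v\<close> unfolding switch_def by (auto simp: doubleton_eq_iff)
  show "(x, y) \<in> neighbours (switch G u v x y) u \<times> neighbours (switch G u v x y) v"
    unfolding switch_def neighbours_def by simp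
qed

lemma switching_inequality:
  fixes H :: "nat set set" and n d :: nat
  assumes uv: "u \<in> {1..n}" "v \<in> {1..n}" and "{u, v} \<notin> H" and H: "finite H"
  defines "A \<equiv> {G \<in> regular_graphs n d. H \<subseteq> G \<and> {u, v} \<in> G}"
    and "B \<equiv> {G \<in> regular_graphs n d. H \<subseteq> G \<and> {u, v} \<notin> G}"
  shows "card A * (n * d) \<le> card B * (d * d) + card A * (4 * d + 2 * card H + 2 * (d * d))"
proof -
  let ?K = "4 * d + 2 * card H + 2 * (d * d)"
  let ?S = "switchable_arcs H u v" and ?T = "\<lambda>G. neighbours G u \<times> neighbours G v"
  let ?switch = "\<lambda>(G, x, y). (switch G u v x y, x, y)"
  have finite: "finite A" "finite B"
    unfolding A_def B_def using finite_regular_graphs by auto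
  have finite_S: "finite (?S G)" if "G \<in> A" for G
    using that finite_arcs unfolding A_def switchable_arcs_def by (auto intro: finite_subset)
  have finite_T: "finite (?T G)" if "G \<in> B" for G
    using that finite_neighbours[OF regular_graph_edges] unfolding B_def by auto
  let ?unswitch = "\<lambda>(G', x, y). (insert {u, v} (insert {x, y} (G' - {{u, x}, {v, y}})), x, y)"
  have "inj_on ?switch (Sigma A ?S)"
  proof (rule inj_on_inverseI[where g = ?unswitch])
    fix p assume "p \<in> Sigma A ?S"
    then obtain G x y where p: "p = (G, x, y)" "G \<in> A" "(x, y) \<in> ?S G"
      by auto
    then have "{u, v} \<in> G" "{x, y} \<in> G" "{u, x} \<notin> G" "{v, y} \<notin> G"
      unfolding A_def switchable_arcs_def arcs_def by auto
    then show "?unswitch (?switch p) = p"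
      using p(1) switch_inverse[symmetric] by simp
  qed
  moreover have "?switch ` Sigma A ?S \<subseteq> Sigma B ?T"
  proof (rule image_subsetI)
    fix p assume "p \<in> Sigma A ?S"
    then obtain G x y where p: "p = (G, x, y)" "G \<in> A" "(x, y) \<in> ?S G"
      by auto
    then show "?switch p \<in> Sigma B ?T"
      using switch_switchable_arc[of G n d H u v x y] assms(3) unfolding A_def B_def by auto
  qed
  moreover have "finite (Sigma B ?T)"
    using finite finite_T by blast
  ultimately have inj: "card (Sigma A ?S) \<le> card (Sigma B ?T)"
    by (rule card_inj_on_le)
  have "(\<Sum>G\<in>A. n * d) \<le> (\<Sum>G\<in>A. card (?S G) + ?K)"
    using card_arcs_le_switchable[OF _ uv H] unfolding A_def by (intro sum_mono) auto
  then have "card A * (n * d) \<le> (\<Sum>G\<in>A. card (?S G) + ?K)"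
    by simp
  also have "\<dots> = card (Sigma A ?S) + card A * ?K"
    using finite finite_S by (simp add: sum.distrib card_SigmaI)
  also have "\<dots> \<le> card (Sigma B ?T) + card A * ?K"
    using inj by simp
  also have "card (Sigma B ?T) = (\<Sum>G\<in>B. card (?T G))"
    using finite finite_T by (simp add: card_SigmaI)
  also have "\<dots> = (\<Sum>G\<in>B. d * d)"
    using uv unfolding B_def by (intro sum.cong) (auto simp: card_cartesian_product card_neighbours_regular)
  finally show ?thesis by simp
qed

definition num_containing :: "nat \<Rightarrow> nat \<Rightarrow> nat set set \<Rightarrow> nat" where
  "num_containing n d F = card {G \<in> regular_graphs n d. F \<subseteq> G}"

lemma num_containing_insert_le:
  fixes K :: real
  assumes F: "finite F" "e \<notin> F" and K: "real (4 * d + 2 * card F + 2 * (d * d)) \<le> K"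
    and nK: "K < real n * real d"
  shows "real (num_containing n d (insert e F))
    \<le> real d ^ 2 / (real n * real d - K) * real (num_containing n d F)"
proof (cases "e \<in> possible_edges n")
  case False
  then have "{G \<in> regular_graphs n d. insert e F \<subseteq> G} = {}"
    using regular_graph_edges by blast
  then have "num_containing n d (insert e F) = 0"
    by (simp only: num_containing_def card.empty)
  moreover have "0 \<le> real d ^ 2 / (real n * real d - K)"
    using nK by simp
  ultimately show ?thesis
    by (simp del: times_divide_eq_left)
next
  case True
  then obtain u v where e: "e = {u, v}" "u \<in> {1..n}" "v \<in> {1..n}"
    unfolding possible_edges_def by blast
  define a where "a = card {G \<in> regular_graphs n d. F \<subseteq> G \<and> {u, v} \<in> G}"
  define b where "b = card {G \<in> regular_graphs n d. F \<subseteq> G \<and> {u, v} \<notin> G}"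
  have "a * (n * d) \<le> b * (d * d) + a * (4 * d + 2 * card F + 2 * (d * d))"
    unfolding a_def b_def using switching_inequality[OF e(2,3) _ F(1)] F(2) e(1) by blast
  then have "real a * (real n * real d) \<le> real b * real d ^ 2 + real a * real (4 * d + 2 * card F + 2 * (d * d))"
    unfolding power2_eq_square by (metis of_nat_add of_nat_le_iff of_nat_mult)
  also have "\<dots> \<le> real b * real d ^ 2 + real a * K"
    using K by (intro add_left_mono mult_left_mono) auto
  finally have "real a * (real n * real d - K) \<le> real b * real d ^ 2"
    by (simp add: algebra_simps)
  moreover have "b \<le> num_containing n d F"
    unfolding num_containing_def b_def using finite_regular_graphs by (intro card_mono) auto
  ultimately have "real a * (real n * real d - K) \<le> real d ^ 2 * real (num_containing n d F)"
    by (smt (verit) mult.commute mult_right_mono of_nat_0_le_iff of_nat_le_iff zero_le_power2)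
  moreover have "num_containing n d (insert e F) = a"
    unfolding num_containing_def a_def e(1) by (metis insert_subset)
  ultimately show ?thesis
    using nK by (simp add: field_simps)
qed

lemma num_containing_le_power:
  fixes K :: real
  assumes "finite F" "card F \<le> m" and K: "real (4 * d + 2 * m + 2 * (d * d)) \<le> K"
    and nK: "K < real n * real d"
  shows "real (num_containing n d F)
    \<le> (real d ^ 2 / (real n * real d - K)) ^ card F * real (card (regular_graphs n d))"
  using assms(1,2)
proof (induction F rule: finite_induct)
  case empty
  then show ?case by (simp add: num_containing_def)
next
  case (insert e F)
  let ?p = "real d ^ 2 / (real n * real d - K)"
  have "real (num_containing n d (insert e F)) \<le> ?p * real (num_containing n d F)"
    using insert K by (intro num_containing_insert_le nK) auto
  also have "\<dots> \<le> ?p * (?p ^ card F * real (card (regular_graphs n d)))"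
    using insert nK by (intro mult_left_mono) auto
  finally show ?case
    using insert by simp
qed

section \<open>Counting short cycles\<close>

definition cycle_edges :: "nat list \<Rightarrow> nat set set" where
  "cycle_edges xs = (\<lambda>i. {xs ! i, xs ! (Suc i mod length xs)}) ` {..<length xs}"

lemma Suc_Suc_mod_neq:
  assumes "3 \<le> k" "i < k"
  shows "Suc (Suc i) mod k \<noteq> i"
  using assms by (cases "Suc (Suc i) < k") (auto simp: mod_Suc)

lemma card_cycle_edges:
  assumes "distinct xs" "3 \<le> length xs"
  shows "card (cycle_edges xs) = length xs"
proof -
  let ?k = "length xs"
  have "inj_on (\<lambda>i. {xs ! i, xs ! (Suc i mod ?k)}) {..<?k}"
  proof (rule inj_onI, rule ccontr)
    fix i j
    assume ij: "i \<in> {..<?k}" "j \<in> {..<?k}" "i \<noteq> j"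
      and eq: "{xs ! i, xs ! (Suc i mod ?k)} = {xs ! j, xs ! (Suc j mod ?k)}"
    have "0 < ?k"
      using assms(2) by linarith
    then have mod_less: "Suc i mod ?k < ?k" "Suc j mod ?k < ?k"
      by simp_all
    have "xs ! i \<noteq> xs ! j"
      using ij assms(1) by (simp add: nth_eq_iff_index_eq)
    then have "xs ! i = xs ! (Suc j mod ?k)" "xs ! (Suc i mod ?k) = xs ! j"
      using eq by (metis doubleton_eq_iff)+
    then have "i = Suc j mod ?k" "j = Suc i mod ?k"
      using nth_eq_iff_index_eq[OF assms(1), of i "Suc j mod ?k"]
        nth_eq_iff_index_eq[OF assms(1), of "Suc i mod ?k" j] mod_less ij by auto
    then show False
      using Suc_Suc_mod_neq[OF assms(2), of i] ij by (simp add: mod_Suc_eq)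
  qed
  then show ?thesis
    unfolding cycle_edges_def by (simp add: card_image)
qed

lemma cycle_edges_if_is_cycle:
  assumes "is_cycle G C"
  obtains xs where "distinct xs" "3 \<le> length xs" "set xs = C" "cycle_edges xs \<subseteq> G"
proof -
  obtain xs where xs: "distinct xs" "3 \<le> length xs" "set xs = C"
    and path: "\<forall>i. i + 1 < length xs \<longrightarrow> {xs ! i, xs ! (i + 1)} \<in> G"
    and closing: "{last xs, hd xs} \<in> G"
    using assms unfolding is_cycle_def by blast
  have "{xs ! i, xs ! (Suc i mod length xs)} \<in> G" if i: "i < length xs" for i
  proof (cases "Suc i < length xs")
    case True
    then show ?thesis using path by simp
  next
    case False
    then have "Suc i = length xs"
      using i by simp
    then have "i = length xs - 1" "Suc i mod length xs = 0"
      by simp_all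
    moreover have "xs \<noteq> []"
      using xs(2) by auto
    ultimately show ?thesis
      using closing by (simp add: last_conv_nth hd_conv_nth)
  qed
  then have "cycle_edges xs \<subseteq> G"
    unfolding cycle_edges_def by auto
  with xs that show thesis by blast
qed

lemma set_subset_if_cycle_edges_subset:
  assumes "G \<subseteq> possible_edges n" "cycle_edges xs \<subseteq> G"
  shows "set xs \<subseteq> {1..n}"
proof
  fix x assume "x \<in> set xs"
  then obtain i where "i < length xs" "x = xs ! i"
    by (auto simp: in_set_conv_nth)
  then have "{x, xs ! (Suc i mod length xs)} \<in> possible_edges n"
    using assms unfolding cycle_edges_def by auto
  then show "x \<in> {1..n}"
    by (rule possible_edgeD)
qed

lemma sum_card_short_cycles_le:
  "(\<Sum>G\<in>regular_graphs n d. card (short_cycles t G))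
    \<le> (\<Sum>xs\<in>{xs. set xs \<subseteq> {1..n} \<and> distinct xs \<and> 3 \<le> length xs \<and> length xs < t}.
          num_containing n d (cycle_edges xs))"
proof -
  let ?L = "{xs. set xs \<subseteq> {1..n} \<and> distinct xs \<and> 3 \<le> length xs \<and> length xs < t}"
  have finite: "finite ?L"
    by (rule finite_subset[OF _ finite_lists_length_le[of "{1..n}" t]]) auto
  have "card (short_cycles t G) \<le> card {xs \<in> ?L. cycle_edges xs \<subseteq> G}"
    if G: "G \<in> regular_graphs n d" for G
  proof -
    have "short_cycles t G \<subseteq> set ` {xs \<in> ?L. cycle_edges xs \<subseteq> G}"
    proof
      fix C assume "C \<in> short_cycles t G"
      then have C: "is_cycle G C" "card C < t"
        unfolding short_cycles_def by auto
      obtain xs where xs: "distinct xs" "3 \<le> length xs" "set xs = C" "cycle_edges xs \<subseteq> G"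
        using C(1) by (rule cycle_edges_if_is_cycle)
      then have "xs \<in> ?L"
        using C(2) distinct_card set_subset_if_cycle_edges_subset[OF regular_graph_edges[OF G]] by fastforce
      then show "C \<in> set ` {xs \<in> ?L. cycle_edges xs \<subseteq> G}"
        using xs by blast
    qed
    moreover have "finite {xs \<in> ?L. cycle_edges xs \<subseteq> G}"
      using finite by (rule finite_subset[rotated]) blast
    ultimately have "card (short_cycles t G) \<le> card (set ` {xs \<in> ?L. cycle_edges xs \<subseteq> G})"
      by (intro card_mono finite_imageI)
    also have "\<dots> \<le> card {xs \<in> ?L. cycle_edges xs \<subseteq> G}"
      using \<open>finite {xs \<in> ?L. cycle_edges xs \<subseteq> G}\<close> by (rule card_image_le)
    finally show ?thesis .
  qed
  then have "(\<Sum>G\<in>regular_graphs n d. card (short_cycles t G))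
      \<le> (\<Sum>G\<in>regular_graphs n d. card {xs \<in> ?L. cycle_edges xs \<subseteq> G})"
    by (rule sum_mono)
  also have "\<dots> = (\<Sum>G\<in>regular_graphs n d. \<Sum>xs\<in>?L. if cycle_edges xs \<subseteq> G then 1 else 0)"
    using finite by (simp add: sum.inter_filter[symmetric])
  also have "\<dots> = (\<Sum>xs\<in>?L. \<Sum>G\<in>regular_graphs n d. if cycle_edges xs \<subseteq> G then 1 else 0)"
    by (rule sum.swap)
  also have "\<dots> = (\<Sum>xs\<in>?L. num_containing n d (cycle_edges xs))"
    unfolding num_containing_def using finite_regular_graphs by (simp add: sum.inter_filter[symmetric])
  finally show ?thesis .
qed

lemma sum_lists_length_less:
  fixes f :: "nat \<Rightarrow> real"
  assumes "finite A"
  shows "(\<Sum>xs\<in>{xs. set xs \<subseteq> A \<and> length xs < t}. f (length xs)) = (\<Sum>k<t. real (card A) ^ k * f k)"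
proof -
  define W where "W k = {xs. set xs \<subseteq> A \<and> length xs = k}" for k
  have "{xs. set xs \<subseteq> A \<and> length xs < t} = (\<Union>k<t. W k)"
    unfolding W_def by auto
  then have "(\<Sum>xs\<in>{xs. set xs \<subseteq> A \<and> length xs < t}. f (length xs)) = (\<Sum>k<t. \<Sum>xs\<in>W k. f (length xs))"
    by (simp only:) (rule sum.UNION_disjoint, auto simp: W_def finite_lists_length_eq assms)
  also have "\<dots> = (\<Sum>k<t. \<Sum>xs\<in>W k. f k)"
    by (intro sum.cong) (auto simp: W_def)
  also have "\<dots> = (\<Sum>k<t. real (card A) ^ k * f k)"
    using assms by (simp add: W_def card_lists_length_eq)
  finally show ?thesis .
qed

lemma sum_card_short_cycles_le_geometric:
  fixes K :: real
  assumes K: "real (4 * d + 2 * t + 2 * (d * d)) \<le> K" and nK: "K < real n * real d"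
  shows "(\<Sum>G\<in>regular_graphs n d. real (card (short_cycles t G)))
    \<le> real (card (regular_graphs n d)) * (\<Sum>k<t. (real n * (real d ^ 2 / (real n * real d - K))) ^ k)"
proof -
  define p where "p = real d ^ 2 / (real n * real d - K)"
  let ?N = "real (card (regular_graphs n d))"
  let ?L = "{xs. set xs \<subseteq> {1..n} \<and> distinct xs \<and> 3 \<le> length xs \<and> length xs < t}"
    and ?W = "{xs. set xs \<subseteq> {1..n} \<and> length xs < t}"
  have "(\<Sum>G\<in>regular_graphs n d. real (card (short_cycles t G)))
      \<le> (\<Sum>xs\<in>?L. real (num_containing n d (cycle_edges xs)))"
    using sum_card_short_cycles_le[where n = n and d = d and t = t] by (simp only: of_nat_le_iff flip: of_nat_sum)
  also have "\<dots> \<le> (\<Sum>xs\<in>?L. p ^ length xs * ?N)"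
  proof (rule sum_mono)
    fix xs assume "xs \<in> ?L"
    then have "card (cycle_edges xs) = length xs" "length xs \<le> t"
      by (simp_all add: card_cycle_edges)
    then show "real (num_containing n d (cycle_edges xs)) \<le> p ^ length xs * ?N"
      using num_containing_le_power[of "cycle_edges xs" t d K n] K nK by (simp add: cycle_edges_def p_def)
  qed
  also have "\<dots> \<le> (\<Sum>xs\<in>?W. p ^ length xs * ?N)"
  proof (rule sum_mono2)
    show "finite ?W"
      by (rule finite_subset[OF _ finite_lists_length_le[of "{1..n}" t]]) auto
  qed (use nK in \<open>auto simp: p_def\<close>)
  also have "\<dots> = (\<Sum>k<t. real n ^ k * (p ^ k * ?N))"
    using sum_lists_length_less[of "{1..n}" "\<lambda>k. p ^ k * ?N" t] by simp
  also have "\<dots> = ?N * (\<Sum>k<t. (real n * p) ^ k)"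
    unfolding sum_distrib_left by (intro sum.cong) (simp_all add: power_mult_distrib)
  finally show ?thesis
    unfolding p_def .
qed

lemma sum_card_short_cycles_le_power:
  fixes q :: real
  assumes q: "1 < q" and d: "1 \<le> d"
    and threshold: "q * real (4 * d + 2 * t + 2 * (d * d)) \<le> (q - 1) * (real n * real d)"
  shows "(\<Sum>G\<in>regular_graphs n d. real (card (short_cycles t G)))
    \<le> real (card (regular_graphs n d)) * (real t * (real d * q) ^ t)"
proof -
  define K where "K = real (4 * d + 2 * t + 2 * (d * d))"
  have "0 < K"
    unfolding K_def of_nat_0_less_iff using d by linarith
  have threshold_K: "q * K \<le> q * (real n * real d) - real n * real d"
    using threshold unfolding K_def by (simp add: algebra_simps)
  have "0 < q * K"
    using q \<open>0 < K\<close> by simp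
  then have "0 < (q - 1) * (real n * real d)"
    using threshold_K by (simp add: algebra_simps)
  then have "0 < real n * real d"
    using q by (simp add: zero_less_mult_iff)
  then have "q * K < q * real n * real d"
    using threshold_K by simp
  then have nK: "K < real n * real d"
    using q by simp
  let ?p = "real d ^ 2 / (real n * real d - K)"
  have "real n * real d \<le> q * (real n * real d - K)"
    using threshold unfolding K_def by (simp add: algebra_simps)
  from mult_left_mono[OF this, of "real d"]
  have "real n * real d ^ 2 \<le> real d * q * (real n * real d - K)"
    by (simp add: power2_eq_square algebra_simps)
  then have np: "real n * ?p \<le> real d * q"
    using nK by (simp add: field_simps)
  have "1 \<le> real d * q"
    using mult_mono[of 1 "real d" 1 q] d q by simp
  have "(\<Sum>k<t. (real n * ?p) ^ k) \<le> (\<Sum>k<t. (real d * q) ^ t)"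
  proof (rule sum_mono)
    fix k assume "k \<in> {..<t}"
    have "(real n * ?p) ^ k \<le> (real d * q) ^ k"
      using np nK by (intro power_mono) auto
    also have "\<dots> \<le> (real d * q) ^ t"
      using \<open>1 \<le> real d * q\<close> \<open>k \<in> {..<t}\<close> by (intro power_increasing) auto
    finally show "(real n * ?p) ^ k \<le> (real d * q) ^ t" .
  qed
  then have geometric_sum: "(\<Sum>k<t. (real n * ?p) ^ k) \<le> real t * (real d * q) ^ t"
    by simp
  have "(\<Sum>G\<in>regular_graphs n d. real (card (short_cycles t G)))
      \<le> real (card (regular_graphs n d)) * (\<Sum>k<t. (real n * ?p) ^ k)"
    using sum_card_short_cycles_le_geometric[of d t K n] nK by (simp add: K_def)
  also have "\<dots> \<le> real (card (regular_graphs n d)) * (real t * (real d * q) ^ t)"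
    using geometric_sum by (rule mult_left_mono) simp
  finally show ?thesis .
qed

section \<open>Asymptotics\<close>

lemma ln_le_powr_div:
  fixes a x :: real
  assumes "0 < a" "0 < x"
  shows "ln x \<le> x powr a / a"
proof -
  have "a * ln x = ln (x powr a)"
    using assms(2) by (simp add: ln_powr)
  also have "\<dots> \<le> x powr a - 1"
    using assms(2) by (intro ln_le_minus_one) simp
  finally show ?thesis
    using assms(1) by (simp add: field_simps)
qed

lemma le_ln_if_le_log:
  fixes x a :: real and d n :: nat
  assumes "a \<le> 1" "3 \<le> d" "1 \<le> n" "x \<le> a * log d n"
  shows "x \<le> ln n"
proof -
  have "exp 1 \<le> real d"
    using exp_le assms(2) by linarith
  then have "1 \<le> ln (real d)"
    using ln_mono[of "exp 1" "real d"] by simp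
  moreover have "0 \<le> ln (real n)"
    using assms(3) by simp
  ultimately have "0 \<le> log d n" "log d n \<le> ln n"
    by (simp_all add: log_def divide_le_eq mult_le_cancel_left1 order_trans)
  then show ?thesis
    using assms(1,4) mult_right_mono[of a 1 "log d n"] by linarith
qed

lemma power_mult_exp_le_powr:
  fixes \<epsilon> :: real and d n t :: nat
  assumes \<epsilon>: "0 < \<epsilon>" "\<epsilon> \<le> 1/2" and d: "3 \<le> d" and n: "1 \<le> n"
    and t: "real t \<le> 2 * \<epsilon> * log d n"
  shows "real t * (real d * exp (\<epsilon> / 2)) ^ t \<le> 2 / \<epsilon> * real n powr (3 * \<epsilon>)"
proof -
  have t_ln: "real t \<le> ln n"
    using \<epsilon> d n t by (intro le_ln_if_le_log[of "2 * \<epsilon>"]) auto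
  have "real d ^ t = real d powr real t"
    using d by (simp add: powr_realpow)
  also have "\<dots> \<le> real d powr (2 * \<epsilon> * log d n)"
    using t d by (intro powr_mono) auto
  also have "\<dots> = (real d powr log d n) powr (2 * \<epsilon>)"
    by (simp add: powr_powr mult.commute)
  also have "\<dots> = real n powr (2 * \<epsilon>)"
    using d n by simp
  finally have d_power: "real d ^ t \<le> real n powr (2 * \<epsilon>)" .
  have "exp (\<epsilon> / 2) ^ t = exp (\<epsilon> / 2 * real t)"
    by (simp add: exp_of_nat_mult[symmetric] mult.commute)
  also have "\<dots> \<le> exp (\<epsilon> / 2 * ln n)"
    using t_ln \<epsilon> by simp
  also have "\<dots> = real n powr (\<epsilon> / 2)"
    using n by (simp add: powr_def mult.commute)
  finally have exp_power: "exp (\<epsilon> / 2) ^ t \<le> real n powr (\<epsilon> / 2)" .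
  have "real t \<le> real n powr (\<epsilon> / 2) / (\<epsilon> / 2)"
    using t_ln ln_le_powr_div[of "\<epsilon> / 2" "real n"] \<epsilon> n by simp
  also have "\<dots> = 2 / \<epsilon> * real n powr (\<epsilon> / 2)"
    by (simp add: field_simps)
  finally have "real t \<le> 2 / \<epsilon> * real n powr (\<epsilon> / 2)" .
  then have "real t * (real d * exp (\<epsilon> / 2)) ^ t
      \<le> (2 / \<epsilon> * real n powr (\<epsilon> / 2)) * (real n powr (2 * \<epsilon>) * real n powr (\<epsilon> / 2))"
    unfolding power_mult_distrib using d_power exp_power \<epsilon> by (intro mult_mono) auto
  also have "\<dots> = 2 / \<epsilon> * real n powr (3 * \<epsilon>)"
    using n by (simp add: powr_add[symmetric] algebra_simps)
  finally show ?thesis .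
qed

lemma eventually_ln_le_linear:
  fixes a b c :: real
  assumes "0 < c"
  shows "\<forall>\<^sub>F n in sequentially. a + b * ln (real n) \<le> c * real n"
proof -
  have "((\<lambda>n. a * inverse (real n) + b * (ln (real n) / real n)) \<longlongrightarrow> a * 0 + b * 0) sequentially"
    by (intro tendsto_intros filterlim_compose[OF ln_x_over_x_tendsto_0 filterlim_real_sequentially]
        tendsto_inverse_0_at_top filterlim_real_sequentially)
  then have "\<forall>\<^sub>F n in sequentially. a * inverse (real n) + b * (ln (real n) / real n) < c"
    using assms by (intro order_tendstoD(2)) auto
  then show ?thesis
    using eventually_gt_at_top[of 0]
    by eventually_elim (simp add: field_simps)
qed

lemma prob_pmf_of_set_ge_le:
  fixes f :: "'a \<Rightarrow> real"
  assumes A: "finite A" "A \<noteq> {}" and c: "0 < c" and f: "\<And>x. x \<in> A \<Longrightarrow> 0 \<le> f x"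
  shows "measure_pmf.prob (pmf_of_set A) {x \<in> A. c \<le> f x} \<le> (\<Sum>x\<in>A. f x) / (real (card A) * c)"
proof -
  let ?S = "{x \<in> A. c \<le> f x}"
  have "real (card ?S) * c = (\<Sum>x\<in>?S. c)"
    by simp
  also have "\<dots> \<le> (\<Sum>x\<in>?S. f x)"
    by (rule sum_mono) simp
  also have "\<dots> \<le> (\<Sum>x\<in>A. f x)"
    using A f by (intro sum_mono2) auto
  finally have "real (card ?S) \<le> (\<Sum>x\<in>A. f x) / c"
    using c by (simp add: field_simps)
  have "measure_pmf.prob (pmf_of_set A) ?S = real (card ?S) / real (card A)"
    using A by (simp add: measure_pmf_of_set Int_absorb1)
  also have "\<dots> \<le> (\<Sum>x\<in>A. f x) / c / real (card A)"
    using \<open>real (card ?S) \<le> (\<Sum>x\<in>A. f x) / c\<close> by (rule divide_right_mono) simp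
  also have "\<dots> = (\<Sum>x\<in>A. f x) / (real (card A) * c)"
    by (simp add: mult.commute)
  finally show ?thesis .
qed

lemma prob_many_short_cycles_le:
  fixes \<epsilon> :: real and d n t :: nat
  assumes \<epsilon>: "0 < \<epsilon>" "\<epsilon> \<le> 1/2" and d: "3 \<le> d" and n: "1 \<le> n"
    and nonempty: "regular_graphs n d \<noteq> {}" and t: "real t \<le> 2 * \<epsilon> * log d n"
    and large: "exp (\<epsilon> / 2) * (4 * real d + 2 * (real d * real d)) + 2 * exp (\<epsilon> / 2) * ln (real n)
      \<le> (exp (\<epsilon> / 2) - 1) * real d * real n"
  shows "measure_pmf.prob (uniform_regular n d)
      {G \<in> regular_graphs n d. real (card (short_cycles t G)) \<ge> real n powr (1 - 2 * \<epsilon>)}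
    \<le> 2 / \<epsilon> * real n powr (5 * \<epsilon> - 1)"
proof -
  define q where "q = exp (\<epsilon> / 2)"
  have q: "1 < q"
    unfolding q_def using \<epsilon> by simp
  let ?N = "real (card (regular_graphs n d))" and ?T = "real n powr (1 - 2 * \<epsilon>)"
    and ?X = "\<lambda>G. real (card (short_cycles t G))"
  have "real t \<le> ln n"
    using \<epsilon> d n t by (intro le_ln_if_le_log[of "2 * \<epsilon>"]) auto
  then have "q * real (4 * d + 2 * t + 2 * (d * d))
      \<le> q * (4 * real d + 2 * (real d * real d)) + 2 * q * ln (real n)"
    using q by (simp add: algebra_simps)
  also have "\<dots> \<le> (q - 1) * (real n * real d)"
    using large unfolding q_def by (simp add: algebra_simps)
  finally have "(\<Sum>G\<in>regular_graphs n d. ?X G) \<le> ?N * (real t * (real d * q) ^ t)"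
    using q d by (intro sum_card_short_cycles_le_power) auto
  also have "\<dots> \<le> ?N * (2 / \<epsilon> * real n powr (3 * \<epsilon>))"
    unfolding q_def using power_mult_exp_le_powr[OF \<epsilon> d n t] by (intro mult_left_mono) auto
  finally have sum_bound: "(\<Sum>G\<in>regular_graphs n d. ?X G) \<le> ?N * (2 / \<epsilon> * real n powr (3 * \<epsilon>))" .
  have "0 < ?N"
    using nonempty finite_regular_graphs by (simp add: card_gt_0_iff)
  have "measure_pmf.prob (uniform_regular n d) {G \<in> regular_graphs n d. ?X G \<ge> ?T}
      \<le> (\<Sum>G\<in>regular_graphs n d. ?X G) / (?N * ?T)"
    unfolding uniform_regular_def using nonempty n
    by (intro prob_pmf_of_set_ge_le finite_regular_graphs) auto
  also have "\<dots> \<le> ?N * (2 / \<epsilon> * real n powr (3 * \<epsilon>)) / (?N * ?T)"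
    using sum_bound \<open>0 < ?N\<close> n by (intro divide_right_mono) auto
  also have "\<dots> = 2 / \<epsilon> * (real n powr (3 * \<epsilon>) / ?T)"
    using \<open>0 < ?N\<close> by simp
  also have "real n powr (3 * \<epsilon>) / ?T = real n powr (5 * \<epsilon> - 1)"
    by (simp add: powr_diff[symmetric] algebra_simps)
  finally show ?thesis .
qed

lemma eventually_prob_many_short_cycles_le:
  fixes \<epsilon> :: real and d :: nat
  assumes \<epsilon>: "0 < \<epsilon>" "\<epsilon> \<le> 1/2" and d: "3 \<le> d"
  shows "\<forall>\<^sub>F n in sequentially. \<forall>t. regular_graphs n d \<noteq> {} \<longrightarrow> real t \<le> 2 * \<epsilon> * log d n \<longrightarrow>
    measure_pmf.prob (uniform_regular n d)
      {G \<in> regular_graphs n d. real (card (short_cycles t G)) \<ge> real n powr (1 - 2 * \<epsilon>)}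
    \<le> 2 / \<epsilon> * real n powr (5 * \<epsilon> - 1)"
proof -
  have "\<forall>\<^sub>F n in sequentially. exp (\<epsilon> / 2) * (4 * real d + 2 * (real d * real d))
      + 2 * exp (\<epsilon> / 2) * ln (real n) \<le> (exp (\<epsilon> / 2) - 1) * real d * real n"
    using \<epsilon> d by (intro eventually_ln_le_linear) simp
  moreover have "\<forall>\<^sub>F n in sequentially. 1 \<le> n"
    by (rule eventually_ge_at_top)
  ultimately show ?thesis
    by eventually_elim (use prob_many_short_cycles_le[OF \<epsilon> d] in blast)
qed

lemma one_le_mult_powr:
  fixes a :: real
  assumes "1 \<le> n" "-1 \<le> a"
  shows "1 \<le> real n * real n powr a"
proof -
  have "real n * real n powr a = real n powr (1 + a)"
    using assms(1) by (simp add: powr_add)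
  also have "1 \<le> \<dots>"
    using assms by (intro ge_one_powr_ge_zero) auto
  finally show ?thesis .
qed

theorem lemma4p1:
  fixes \<epsilon> :: real and d :: nat
  assumes "0 < \<epsilon>" and "\<epsilon> < 1/5" and "d \<ge> 3"
  shows "\<exists>C > 0. \<forall>n t. n \<ge> 1 \<longrightarrow> regular_graphs n d \<noteq> {} \<longrightarrow>
           1 \<le> t \<longrightarrow> real t \<le> 2 * \<epsilon> * log d n \<longrightarrow>
           measure_pmf.prob (uniform_regular n d)
             {G \<in> regular_graphs n d. real (card (short_cycles t G)) \<ge> real n powr (1 - 2 * \<epsilon>)}
           \<le> C * real n powr (5 * \<epsilon> - 1)"
proof -
  let ?P = "\<lambda>n t. measure_pmf.prob (uniform_regular n d)
    {G \<in> regular_graphs n d. real (card (short_cycles t G)) \<ge> real n powr (1 - 2 * \<epsilon>)}"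
  obtain N where tail: "\<And>n t. N \<le> n \<Longrightarrow> regular_graphs n d \<noteq> {} \<Longrightarrow> real t \<le> 2 * \<epsilon> * log d n \<Longrightarrow>
      ?P n t \<le> 2 / \<epsilon> * real n powr (5 * \<epsilon> - 1)"
    using eventually_prob_many_short_cycles_le[of \<epsilon> d] assms unfolding eventually_sequentially by auto
  define C where "C = max (2 / \<epsilon>) (real N)"
  have "?P n t \<le> C * real n powr (5 * \<epsilon> - 1)"
    if "1 \<le> n" "regular_graphs n d \<noteq> {}" "real t \<le> 2 * \<epsilon> * log d n" for n t
  proof (cases "N \<le> n")
    case True
    then have "?P n t \<le> 2 / \<epsilon> * real n powr (5 * \<epsilon> - 1)"
      using tail that by blast
    also have "\<dots> \<le> C * real n powr (5 * \<epsilon> - 1)"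
      unfolding C_def by (intro mult_right_mono) auto
    finally show ?thesis .
  next
    case False
    have "?P n t \<le> 1"
      by simp
    also have "\<dots> \<le> real n * real n powr (5 * \<epsilon> - 1)"
      using one_le_mult_powr[OF that(1)] assms(1) by simp
    also have "\<dots> \<le> C * real n powr (5 * \<epsilon> - 1)"
      unfolding C_def using False by (intro mult_right_mono) auto
    finally show ?thesis .
  qed
  moreover have "0 < C"
    unfolding C_def using assms(1) by (simp add: less_max_iff_disj)
  ultimately show ?thesis
    by blast
qed

end
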